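(* Let $n\ge1$, $G\le S_n$ and $\chi:G\to\mathbb{C}$ any function. For every $\sigma\in S_n$, $$d_\chi^G(S_\sigma)=\sum_{\tau\in X_\sigma}\hat\chi(\tau).$$
   Context: $S_n$ is the symmetric group on $[n]=\{1,\dots,n\}$. For $G\le S_n$ and $\chi:G\to\mathbb C$, $\hat\chi:S_n\to\mathbb C$ is the extension of $\chi$ that vanishes outside $G$, and the generalized matrix function $d_\chi^G:M_n(\mathbb C)\to\mathbb C$ is $d_\chi^G(A)=\sum_{\sigma\in S_n}\hat\chi(\sigma)\prod_{i=1}^n A_{i\,\sigma(i)}$. For $\sigma\in S_n$, $S_\sigma$ is the $n\times n$ $0/1$ matrix with $(S_\sigma)_{ij}=1$ iff $\sigma(i)=j$ or $\sigma^{-1}(i)=j$. Every $\sigma\in S_n$ has a unique (up to order) decomposition $\sigma=\sigma_1\cdots\sigma_k$ into pairwise disjoint cycles of length at least $2$ ($k=0$ for the identity). For a cycle $\omega=(a_1\,a_2\,\dots\,a_s)$ with $s$ even, let $S(\omega)=\{(a_1\,a_2)(a_3\,a_4)\cdots(a_{s-1}\,a_s),\ (a_s\,a_1)(a_2\,a_3)\cdots(a_{s-2}\,a_{s-1})\}$. Set $X_\omega=\{\omega,\omega^{-1}\}$ if $s$ is odd and $X_\omega=\{\omega,\omega^{-1}\}\cup S(\omega)$ if $s$ is even; for $\sigma=\sigma_1\cdots\sigma_k$ set $X_\sigma=\{\tau_1\cdots\tau_k:\tau_j\in X_{\sigma_j}\}$ ($X_{\mathrm{id}}=\{\mathrm{id}\}$).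 *)

theory Defs
  imports Complex_Main "HOL-Combinatorics.Cycles" "HOL-Algebra.Sym_Groups"
begin

definition ext_zero :: "(nat \<Rightarrow> nat) set \<Rightarrow> ((nat \<Rightarrow> nat) \<Rightarrow> complex) \<Rightarrow> (nat \<Rightarrow> nat) \<Rightarrow> complex" where
  "ext_zero G chi \<sigma> = (if \<sigma> \<in> G then chi \<sigma> else 0)"

definition gen_matrix_fun :: "nat \<Rightarrow> (nat \<Rightarrow> nat) set \<Rightarrow> ((nat \<Rightarrow> nat) \<Rightarrow> complex)
    \<Rightarrow> (nat \<Rightarrow> nat \<Rightarrow> complex) \<Rightarrow> complex" where
  "gen_matrix_fun n G chi A =
     (\<Sum>\<sigma> \<in> {\<sigma>. \<sigma> permutes {1..n}}. ext_zero G chi \<sigma> * (\<Prod>i\<in>{1..n}. A i (\<sigma> i)))"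

definition S_mat :: "(nat \<Rightarrow> nat) \<Rightarrow> nat \<Rightarrow> nat \<Rightarrow> complex" where
  "S_mat \<sigma> i j = (if \<sigma> i = j \<or> inv_into UNIV \<sigma> i = j then 1 else 0)"

fun pair_prod :: "nat list \<Rightarrow> nat \<Rightarrow> nat" where
  "pair_prod (a # b # rest) = transpose a b \<circ> pair_prod rest"
| "pair_prod _ = id"

definition S_set :: "nat list \<Rightarrow> (nat \<Rightarrow> nat) set" where
  "S_set cs = {pair_prod cs, pair_prod (last cs # butlast cs)}"

text \<open>X_omega for the cycle omega = cycle_of_list cs (maps a_i to a_(i+1)).\<close>
definition X_cycle :: "nat list \<Rightarrow> (nat \<Rightarrow> nat) set" where
  "X_cycle cs = (if odd (length cs) then {cycle_of_list cs, inv_into UNIV (cycle_of_list cs)}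
                 else {cycle_of_list cs, inv_into UNIV (cycle_of_list cs)} \<union> S_set cs)"

definition cycle_decomp_of :: "(nat \<Rightarrow> nat) \<Rightarrow> nat list list \<Rightarrow> bool" where
  "cycle_decomp_of \<sigma> css \<longleftrightarrow>
     (\<forall>cs \<in> set css. distinct cs \<and> length cs \<ge> 2) \<and>
     (\<forall>i < length css. \<forall>j < length css. i \<noteq> j \<longrightarrow> set (css ! i) \<inter> set (css ! j) = {}) \<and>
     \<sigma> = foldr (\<circ>) (map cycle_of_list css) id"

definition X_perm :: "nat list list \<Rightarrow> (nat \<Rightarrow> nat) set" where
  "X_perm css = {foldr (\<circ>) \<tau>s id | \<tau>s. list_all2 (\<lambda>\<tau> cs. \<tau> \<in> X_cycle cs) \<tau>s css}"

end

theory Submission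
  imports Defs
begin

text \<open>The product \<open>\<Prod>i. S\<^sub>\<sigma> i (\<tau> i)\<close> is \<open>1\<close> if \<open>\<tau> i \<in> {\<sigma> i, \<sigma>\<inverse> i}\<close> for all \<open>i\<close> and \<open>0\<close>
  otherwise, so \<open>d\<^sub>\<chi>\<^sup>G(S\<^sub>\<sigma>)\<close> sums \<open>\<chi>\<close> over the permutations \<open>\<tau>\<close> with this property. As the
  cycles of \<open>\<sigma>\<close> have disjoint supports, these \<open>\<tau>\<close> are exactly the products of permutations
  \<open>\<tau>\<^sub>j\<close> having the property with respect to the single cycles \<open>\<sigma>\<^sub>j\<close>. On a cycle
  \<open>(a\<^sub>1 \<dots> a\<^sub>s)\<close> such a \<open>\<tau>\<^sub>j\<close> moves every \<open>a\<^sub>k\<close> one step forward or backward. If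
  \<open>s \<ge> 3\<close>, injectivity forces the same direction at \<open>a\<^sub>k\<close> and \<open>a\<^sub>k\<^sub>+\<^sub>2\<close>, so the direction is
  either constant, giving \<open>\<omega>\<close> and \<open>\<omega>\<inverse>\<close>, or, for even \<open>s\<close>, alternating, giving the two
  elements of \<open>S(\<omega>)\<close>.\<close>

definition cyc_nth :: "'a list \<Rightarrow> nat \<Rightarrow> 'a" where
  "cyc_nth xs k = xs ! (k mod length xs)"

lemma cyc_nth_cong: "i mod length xs = j mod length xs \<Longrightarrow> cyc_nth xs i = cyc_nth xs j"
  by (simp add: cyc_nth_def)

lemma cyc_nth_add_mult_length [simp]: "cyc_nth xs (k + length xs * m) = cyc_nth xs k"
  by (rule cyc_nth_cong) simp

lemma cyc_nth_add_length [simp]: "cyc_nth xs (k + length xs) = cyc_nth xs k"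
  using cyc_nth_add_mult_length[of xs k 1] by simp

lemma cyc_nth_eq_iff:
  "distinct xs \<Longrightarrow> xs \<noteq> [] \<Longrightarrow> cyc_nth xs i = cyc_nth xs j \<longleftrightarrow> i mod length xs = j mod length xs"
  by (simp add: cyc_nth_def nth_eq_iff_index_eq)

lemma in_set_cyc_nthE:
  assumes "y \<in> set xs" obtains k where "y = cyc_nth xs k"
proof -
  obtain i where "i < length xs" "y = xs ! i" using assms by (auto simp: in_set_conv_nth)
  then show ?thesis using that[of i] by (simp add: cyc_nth_def)
qed

lemma fun_eq_on_cyc_nthI:
  assumes "\<And>y. y \<notin> set xs \<Longrightarrow> f y = g y" and "\<And>k. f (cyc_nth xs k) = g (cyc_nth xs k)"
  shows "f = g"
proof
  fix y
  show "f y = g y"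
    using assms by (cases "y \<in> set xs") (auto elim: in_set_cyc_nthE)
qed

lemma cyc_nth_rotate_right:
  assumes "xs \<noteq> []"
  shows "cyc_nth (last xs # butlast xs) (Suc k) = cyc_nth xs k"
proof -
  let ?s = "length xs"
  have len: "length (last xs # butlast xs) = ?s" using assms by simp
  show ?thesis
  proof (cases "Suc (k mod ?s) = ?s")
    case True
    then have "Suc k mod ?s = 0" "k mod ?s = ?s - 1" by (auto simp: mod_Suc)
    then show ?thesis using assms by (simp add: cyc_nth_def len last_conv_nth)
  next
    case False
    moreover have "k mod ?s < ?s" using assms by simp
    ultimately have "Suc k mod ?s = Suc (k mod ?s)" "k mod ?s < ?s - 1"
      by (auto simp: mod_Suc)
    then show ?thesis unfolding cyc_nth_def len by (simp add: nth_butlast)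
  qed
qed

lemma set_rotate_right: "xs \<noteq> [] \<Longrightarrow> set (last xs # butlast xs) = set xs"
  by (metis append_butlast_last_id rotate1.simps(2) set_rotate1)

lemma cycle_of_list_cyc_nth:
  assumes "distinct cs" "cs \<noteq> []"
  shows "cycle_of_list cs (cyc_nth cs k) = cyc_nth cs (Suc k)"
proof -
  have "cycle_of_list cs (cs ! (k mod length cs)) = map (cycle_of_list cs) cs ! (k mod length cs)"
    using assms(2) by simp
  also have "\<dots> = rotate1 cs ! (k mod length cs)"
    using cyclic_rotation[OF assms(1), of 1] by simp
  also have "\<dots> = cs ! (Suc (k mod length cs) mod length cs)"
    using assms(2) by (simp add: nth_rotate1)
  finally show ?thesis by (simp add: cyc_nth_def mod_Suc_eq)
qed

lemma inv_cycle_of_list_cyc_nth: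
  assumes "distinct cs" "cs \<noteq> []"
  shows "inv_into UNIV (cycle_of_list cs) (cyc_nth cs k) = cyc_nth cs (k + length cs - 1)"
proof -
  have "cyc_nth cs k = cycle_of_list cs (cyc_nth cs (k + length cs - 1))"
    using assms cycle_of_list_cyc_nth[OF assms, of "k + length cs - 1"] by simp
  then show ?thesis
    using permutes_inverses(2)[OF cycle_permutes] by metis
qed

lemma inv_cycle_of_list_outside: "y \<notin> set cs \<Longrightarrow> inv_into UNIV (cycle_of_list cs) y = y"
  using permutes_not_in[OF permutes_inv[OF cycle_permutes]] .

lemma pair_prod_outside: "y \<notin> set l \<Longrightarrow> pair_prod l y = y"
  by (induction l rule: pair_prod.induct) (auto simp: transpose_eq_iff)

lemma bij_pair_prod: "bij (pair_prod l)"
  by (induction l rule: pair_prod.induct)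
    (auto simp only: pair_prod.simps intro!: bij_comp bij_transpose bij_id)

lemma pair_prod_nth:
  "distinct l \<Longrightarrow> even (length l) \<Longrightarrow> j < length l \<Longrightarrow>
    pair_prod l (l ! j) = l ! (if even j then Suc j else j - 1)"
proof (induction l arbitrary: j rule: pair_prod.induct)
  case (1 a b rest)
  have ab: "a \<notin> set rest" "b \<notin> set rest" "a \<noteq> b" using "1.prems"(1) by auto
  consider "j = 0" | "j = 1" | i where "j = Suc (Suc i)" by (metis One_nat_def not0_implies_Suc)
  then show ?case
  proof cases
    case 3
    let ?i' = "if even i then Suc i else i - 1"
    have i: "i < length rest" using "1.prems"(3) 3 by simp
    have IH: "pair_prod rest (rest ! i) = rest ! ?i'" using "1.IH"[OF _ _ i] "1.prems" by simp
    have "?i' < length rest" using i "1.prems"(2) by (cases "even i") (auto, presburger)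
    then have "rest ! ?i' \<in> set rest" by (rule nth_mem)
    then have "transpose a b (rest ! ?i') = rest ! ?i'"
      using ab by (metis transpose_apply_other)
    then show ?thesis using 3 IH by (cases i) auto
  qed (use ab in \<open>auto simp: pair_prod_outside\<close>)
qed auto

lemma pair_prod_cyc_nth:
  assumes "distinct l" "even (length l)" "l \<noteq> []"
  shows "pair_prod l (cyc_nth l k) = cyc_nth l (if even k then Suc k else k + length l - 1)"
proof -
  let ?s = "length l" and ?j = "k mod length l"
  have j: "?j < ?s" "even ?j \<longleftrightarrow> even k"
    using assms(2,3) dvd_mod_iff[of 2 ?s k] by auto
  have pp: "pair_prod l (cyc_nth l k) = l ! (if even ?j then Suc ?j else ?j - 1)"
    using pair_prod_nth[OF assms(1,2) j(1)] by (simp add: cyc_nth_def)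
  show ?thesis
  proof (cases "even k")
    case True
    then have "Suc ?j \<noteq> ?s" using j assms(2) by (metis even_Suc)
    then show ?thesis using True j pp by (simp add: cyc_nth_def mod_Suc)
  next
    case False
    then obtain k' where k': "k = Suc k'" by (cases k) auto
    have "Suc (k' mod ?s) \<noteq> ?s" using False j k' by (auto simp: mod_Suc)
    then have "?j - 1 = k' mod ?s" using k' by (simp add: mod_Suc)
    moreover have "k + ?s - 1 = k' + ?s" using k' by simp
    ultimately show ?thesis using False j pp by (simp add: cyc_nth_def)
  qed
qed

lemma pair_prod_rotate_right_cyc_nth:
  assumes "distinct cs" "even (length cs)" "cs \<noteq> []"
  shows "pair_prod (last cs # butlast cs) (cyc_nth cs k) =
    cyc_nth cs (if odd k then Suc k else k + length cs - 1)"
proof -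
  let ?r = "last cs # butlast cs"
  have "distinct (butlast cs @ [last cs])"
    using assms(1) by (simp only: append_butlast_last_id[OF assms(3)])
  then have r: "distinct ?r" "length ?r = length cs"
    using assms(3) by (auto simp del: append_butlast_last_id)
  have "pair_prod ?r (cyc_nth cs k) = pair_prod ?r (cyc_nth ?r (Suc k))"
    using cyc_nth_rotate_right[OF assms(3)] by simp
  also have "\<dots> = cyc_nth ?r (if odd k then Suc (Suc k) else Suc (k + length cs - 1))"
    using pair_prod_cyc_nth[of ?r "Suc k"] r assms by simp
  also have "\<dots> = cyc_nth cs (if odd k then Suc k else k + length cs - 1)"
    using cyc_nth_rotate_right[OF assms(3)] by simp
  finally show ?thesis .
qed

text \<open>\<open>S_compatible \<sigma> \<tau>\<close>: all entries \<open>(i, \<tau> i)\<close> of \<open>S\<^sub>\<sigma>\<close> are \<open>1\<close>, i.e. \<open>\<tau>\<close> contributes to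
  \<open>d\<^sub>\<chi>\<^sup>G(S\<^sub>\<sigma>)\<close>.\<close>
definition S_compatible :: "('a \<Rightarrow> 'a) \<Rightarrow> ('a \<Rightarrow> 'a) \<Rightarrow> bool" where
  "S_compatible \<sigma> \<tau> \<longleftrightarrow> inj \<tau> \<and> (\<forall>a. \<tau> a = \<sigma> a \<or> \<tau> a = inv_into UNIV \<sigma> a)"

lemma S_compatible_cycle_iff:
  assumes "distinct cs" "cs \<noteq> []"
  shows "S_compatible (cycle_of_list cs) \<tau> \<longleftrightarrow> inj \<tau> \<and> (\<forall>y. y \<notin> set cs \<longrightarrow> \<tau> y = y) \<and>
    (\<forall>k. \<tau> (cyc_nth cs k) = cyc_nth cs (Suc k) \<or> \<tau> (cyc_nth cs k) = cyc_nth cs (k + length cs - 1))"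
    (is "_ \<longleftrightarrow> _ \<and> ?outside \<and> ?on_cycle")
proof -
  let ?c = "cycle_of_list cs"
  note on = cycle_of_list_cyc_nth[OF assms] inv_cycle_of_list_cyc_nth[OF assms]
  have "(\<forall>a. \<tau> a = ?c a \<or> \<tau> a = inv_into UNIV ?c a) \<longleftrightarrow> ?outside \<and> ?on_cycle"
  proof
    assume H: "\<forall>a. \<tau> a = ?c a \<or> \<tau> a = inv_into UNIV ?c a"
    have "\<tau> y = y" if "y \<notin> set cs" for y
      using H id_outside_supp[OF that] inv_cycle_of_list_outside[OF that] by metis
    moreover have "\<tau> (cyc_nth cs k) = cyc_nth cs (Suc k) \<or>
        \<tau> (cyc_nth cs k) = cyc_nth cs (k + length cs - 1)" for k
      using H on by metis
    ultimately show "?outside \<and> ?on_cycle" by blast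
  next
    assume H: "?outside \<and> ?on_cycle"
    show "\<forall>a. \<tau> a = ?c a \<or> \<tau> a = inv_into UNIV ?c a"
    proof
      fix a
      show "\<tau> a = ?c a \<or> \<tau> a = inv_into UNIV ?c a"
      proof (cases "a \<in> set cs")
        case True
        then obtain k where "a = cyc_nth cs k" by (rule in_set_cyc_nthE)
        then show ?thesis using H on by metis
      qed (use H id_outside_supp in metis)
    qed
  qed
  then show ?thesis by (simp add: S_compatible_def)
qed

lemma S_compatible_self: "inj \<sigma> \<Longrightarrow> S_compatible \<sigma> \<sigma>"
  by (simp add: S_compatible_def)

lemma S_compatible_inv: "bij \<sigma> \<Longrightarrow> S_compatible \<sigma> (inv_into UNIV \<sigma>)"
  by (simp add: S_compatible_def bij_is_inj bij_imp_bij_inv)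

lemma X_cycle_imp_S_compatible:
  assumes "distinct cs" "2 \<le> length cs" "\<tau> \<in> X_cycle cs"
  shows "S_compatible (cycle_of_list cs) \<tau>"
proof -
  have ne: "cs \<noteq> []" using assms(2) by auto
  have bij: "bij (cycle_of_list cs)" using permutes_bij[OF cycle_permutes] .
  have "S_compatible (cycle_of_list cs) (pair_prod cs)"
    and "S_compatible (cycle_of_list cs) (pair_prod (last cs # butlast cs))" if "even (length cs)"
    using that bij_pair_prod pair_prod_outside pair_prod_cyc_nth[OF assms(1) that ne]
      pair_prod_rotate_right_cyc_nth[OF assms(1) that ne] set_rotate_right[OF ne]
    by (auto simp: S_compatible_cycle_iff[OF assms(1) ne] bij_is_inj)
  then show ?thesis
    using assms(3) S_compatible_self[OF bij_is_inj[OF bij]] S_compatible_inv[OF bij]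
    by (auto simp: X_cycle_def S_set_def split: if_splits)
qed

text \<open>Stepping forward at \<open>a\<^sub>k\<close> and backward at \<open>a\<^sub>k\<^sub>+\<^sub>2\<close> would send both to \<open>a\<^sub>k\<^sub>+\<^sub>1\<close>.\<close>
lemma S_compatible_cycle_forward_add2:
  assumes "distinct cs" "3 \<le> length cs" "S_compatible (cycle_of_list cs) \<tau>"
    and "\<tau> (cyc_nth cs k) = cyc_nth cs (Suc k)"
  shows "\<tau> (cyc_nth cs (k + 2)) = cyc_nth cs (Suc (k + 2))"
proof (rule ccontr)
  let ?s = "length cs"
  have ne: "cs \<noteq> []" using assms(2) by auto
  have on_cycle: "\<tau> (cyc_nth cs i) = cyc_nth cs (Suc i) \<or> \<tau> (cyc_nth cs i) = cyc_nth cs (i + ?s - 1)" for i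
    using assms(3) S_compatible_cycle_iff[OF assms(1) ne] by blast
  assume "\<tau> (cyc_nth cs (k + 2)) \<noteq> cyc_nth cs (Suc (k + 2))"
  then have "\<tau> (cyc_nth cs (k + 2)) = cyc_nth cs (k + 2 + ?s - 1)"
    using on_cycle by blast
  also have "k + 2 + ?s - 1 = Suc k + ?s" by simp
  also have "cyc_nth cs (Suc k + ?s) = \<tau> (cyc_nth cs k)"
    using assms(4) by (simp only: cyc_nth_add_length)
  finally have "\<tau> (cyc_nth cs (k + 2)) = \<tau> (cyc_nth cs k)" .
  then have "cyc_nth cs (k + 2) = cyc_nth cs k"
    using assms(3) injD unfolding S_compatible_def by metis
  then have "k mod ?s = (k + 2) mod ?s" using cyc_nth_eq_iff[OF assms(1) ne] by simp
  then have "?s dvd 2" using mod_eq_dvd_iff_nat[of k "k + 2" ?s] by simp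
  then show False using assms(2) dvd_imp_le[of ?s 2] by simp
qed

lemma S_compatible_cycle_forward_mod2:
  assumes "distinct cs" "3 \<le> length cs" "S_compatible (cycle_of_list cs) \<tau>"
  shows "\<tau> (cyc_nth cs k) = cyc_nth cs (Suc k) \<longleftrightarrow>
    \<tau> (cyc_nth cs (k mod 2)) = cyc_nth cs (Suc (k mod 2))"
proof -
  define fwd where "fwd i \<longleftrightarrow> \<tau> (cyc_nth cs i) = cyc_nth cs (Suc i)" for i
  have step: "fwd (i + 2 * j)" if "fwd i" for i j
  proof (induction j)
    case (Suc j)
    have "i + 2 * Suc j = (i + 2 * j) + 2" by simp
    then show ?case
      using Suc S_compatible_cycle_forward_add2[OF assms, of "i + 2 * j"] by (simp only: fwd_def)
  qed (use that in simp)
  have periodic: "fwd (i + length cs * m) \<longleftrightarrow> fwd i" for i m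
    unfolding fwd_def using cyc_nth_add_mult_length[of cs "Suc i" m] by simp
  obtain s' where s: "length cs = Suc s'" using assms(2) by (cases "length cs") auto
  have k: "k = k mod 2 + 2 * (k div 2)" by simp
  have "fwd k \<longleftrightarrow> fwd (k mod 2)"
  proof
    assume "fwd k"
    then have "fwd (k + 2 * (s' * (k div 2)))" by (rule step)
    also have "k + 2 * (s' * (k div 2)) = k mod 2 + length cs * (2 * (k div 2))"
      using s by (simp add: algebra_simps)
    finally show "fwd (k mod 2)" by (simp only: periodic)
  next
    assume "fwd (k mod 2)"
    then show "fwd k" by (subst k) (rule step)
  qed
  then show ?thesis by (simp add: fwd_def)
qed

lemma S_compatible_cycle_in_X_cycle:
  assumes "distinct cs" "2 \<le> length cs" "S_compatible (cycle_of_list cs) \<tau>"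
  shows "\<tau> \<in> X_cycle cs"
proof -
  let ?s = "length cs" and ?c = "cycle_of_list cs" and ?r = "last cs # butlast cs"
  have ne: "cs \<noteq> []" using assms(2) by auto
  define fwd where "fwd k \<longleftrightarrow> \<tau> (cyc_nth cs k) = cyc_nth cs (Suc k)" for k
  have outside: "\<tau> y = y" if "y \<notin> set cs" for y
    using assms(3) that S_compatible_cycle_iff[OF assms(1) ne] by blast
  have on_cycle:
    "\<tau> (cyc_nth cs k) = (if fwd k then cyc_nth cs (Suc k) else cyc_nth cs (k + ?s - 1))" for k
    using assms(3) S_compatible_cycle_iff[OF assms(1) ne] unfolding fwd_def by metis
  have eqI: "\<tau> = g" if "\<And>y. y \<notin> set cs \<Longrightarrow> g y = y"
    and "\<And>k. g (cyc_nth cs k) = (if fwd k then cyc_nth cs (Suc k) else cyc_nth cs (k + ?s - 1))" for g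
    using that outside on_cycle by (intro fun_eq_on_cyc_nthI[of cs]) simp_all
  have cyc: "\<tau> = ?c" if "\<And>k. fwd k"
    using that by (intro eqI) (simp_all add: id_outside_supp cycle_of_list_cyc_nth[OF assms(1) ne])
  have inv_cyc: "\<tau> = inv_into UNIV ?c" if "\<And>k. \<not> fwd k"
    using that by (intro eqI)
      (simp_all add: inv_cycle_of_list_outside inv_cycle_of_list_cyc_nth[OF assms(1) ne])
  show ?thesis
  proof (cases "?s = 2")
    case True
    then have "k + ?s - 1 = Suc k" for k by simp
    then have "fwd k" for k using on_cycle[of k] unfolding fwd_def by metis
    then show ?thesis using cyc by (simp add: X_cycle_def)
  next
    case False
    then have fwd_mod2: "fwd k \<longleftrightarrow> (if even k then fwd 0 else fwd 1)" for k
      using S_compatible_cycle_forward_mod2[OF assms(1) _ assms(3), of k] assms(2)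
      unfolding fwd_def by (simp add: even_iff_mod_2_eq_zero odd_iff_mod_2_eq_one)
    have "fwd ?s \<longleftrightarrow> fwd 0"
      unfolding fwd_def using cyc_nth_add_length[of cs 0] cyc_nth_add_length[of cs 1] by simp
    then have alternating: "even ?s" if "fwd 0 \<noteq> fwd 1"
      using that fwd_mod2[of ?s] by metis
    consider "\<And>k. fwd k" | "\<And>k. \<not> fwd k"
      | "even ?s" "\<And>k. fwd k \<longleftrightarrow> even k" | "even ?s" "\<And>k. fwd k \<longleftrightarrow> odd k"
      using fwd_mod2 alternating by metis
    then show ?thesis
    proof cases
      case 3
      then have "\<tau> = pair_prod cs"
        by (intro eqI) (simp_all add: pair_prod_outside pair_prod_cyc_nth[OF assms(1) _ ne])
      then show ?thesis using 3 by (simp add: X_cycle_def S_set_def)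
    next
      case 4
      then have "\<tau> = pair_prod ?r"
        by (intro eqI) (simp_all add: pair_prod_outside[of _ ?r, unfolded set_rotate_right[OF ne]]
            pair_prod_rotate_right_cyc_nth[OF assms(1) _ ne])
      then show ?thesis using 4 by (simp add: X_cycle_def S_set_def)
    qed (use cyc inv_cyc in \<open>auto simp: X_cycle_def\<close>)
  qed
qed

lemma X_cycle_eq:
  "distinct cs \<Longrightarrow> 2 \<le> length cs \<Longrightarrow> X_cycle cs = {\<tau>. S_compatible (cycle_of_list cs) \<tau>}"
  using X_cycle_imp_S_compatible S_compatible_cycle_in_X_cycle by blast

lemma permutes_disjoint_not_in:
  assumes "g permutes B" "A \<inter> B = {}" "a \<notin> A"
  shows "g a \<notin> A"
  using assms permutes_in_image[OF assms(1)] permutes_not_in[OF assms(1)] by (cases "a \<in> B") auto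

lemma comp_apply_disjoint_permutes:
  assumes "f permutes A" "g permutes B" "A \<inter> B = {}"
  shows "(f \<circ> g) a = (if a \<in> A then f a else g a)"
proof (cases "a \<in> A")
  case True
  then have "a \<notin> B" using assms(3) by blast
  then show ?thesis using True permutes_not_in[OF assms(2)] by simp
next
  case False
  then show ?thesis using permutes_not_in[OF assms(1)] permutes_disjoint_not_in[OF assms(2,3)] by simp
qed

lemma inv_comp_apply_disjoint_permutes:
  assumes "f permutes A" "g permutes B" "A \<inter> B = {}"
  shows "inv_into UNIV (f \<circ> g) a = (if a \<in> A then inv_into UNIV f a else inv_into UNIV g a)"
proof -
  have inv: "inv_into UNIV f permutes A" "inv_into UNIV g permutes B"
    using assms(1,2) by (simp_all add: permutes_inv)
  have "inv_into UNIV (f \<circ> g) a = (inv_into UNIV g \<circ> inv_into UNIV f) a"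
    using assms(1,2) by (simp add: o_inv_distrib permutes_bij)
  also have "(inv_into UNIV g \<circ> inv_into UNIV f) a =
      (if a \<in> B then inv_into UNIV g a else inv_into UNIV f a)"
    using assms(3) by (intro comp_apply_disjoint_permutes[OF inv(2,1)]) blast
  finally show ?thesis
    using assms(3) permutes_not_in[OF inv(1)] permutes_not_in[OF inv(2)] by auto
qed

lemma S_compatible_comp_disjoint_iff_pointwise:
  assumes "f permutes A" "g permutes B" "A \<inter> B = {}"
  shows "S_compatible (f \<circ> g) \<tau> \<longleftrightarrow> inj \<tau> \<and>
    (\<forall>a\<in>A. \<tau> a = f a \<or> \<tau> a = inv_into UNIV f a) \<and> (\<forall>a\<in>-A. \<tau> a = g a \<or> \<tau> a = inv_into UNIV g a)"
  unfolding S_compatible_def comp_apply_disjoint_permutes[OF assms] inv_comp_apply_disjoint_permutes[OF assms]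
  by auto

lemma inj_override_id_outside:
  assumes "inj \<tau>" "\<And>a. a \<in> A \<Longrightarrow> \<tau> a \<in> A"
  shows "inj (\<lambda>a. if a \<in> A then \<tau> a else a)"
  by (rule injI) (use assms in \<open>auto split: if_splits dest: injD\<close>)

lemma S_compatible_comp_disjointI:
  assumes "f permutes A" "g permutes B" "A \<inter> B = {}"
    and "S_compatible f \<tau>1" "S_compatible g \<tau>2"
  shows "S_compatible (f \<circ> g) (\<tau>1 \<circ> \<tau>2)"
proof -
  have inv: "inv_into UNIV f permutes A" "inv_into UNIV g permutes B"
    using assms(1,2) by (simp_all add: permutes_inv)
  have \<tau>1: "\<tau>1 x = f x \<or> \<tau>1 x = inv_into UNIV f x" for x using assms(4) by (simp add: S_compatible_def)
  have \<tau>2: "\<tau>2 x = g x \<or> \<tau>2 x = inv_into UNIV g x" for x using assms(5) by (simp add: S_compatible_def)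
  have "\<tau>2 a = a" if "a \<in> A" for a
  proof -
    have "a \<notin> B" using that assms(3) by blast
    then show ?thesis using \<tau>2 permutes_not_in[OF assms(2)] permutes_not_in[OF inv(2)] by metis
  qed
  moreover have "\<tau>1 (\<tau>2 a) = \<tau>2 a" if "a \<notin> A" for a
  proof -
    have "\<tau>2 a \<notin> A"
      using \<tau>2 that permutes_disjoint_not_in[OF assms(2,3)] permutes_disjoint_not_in[OF inv(2) assms(3)] by metis
    then show ?thesis using \<tau>1 permutes_not_in[OF assms(1)] permutes_not_in[OF inv(1)] by metis
  qed
  moreover have "inj (\<tau>1 \<circ> \<tau>2)" using assms(4,5) by (simp add: S_compatible_def inj_compose)
  ultimately show ?thesis
    unfolding S_compatible_comp_disjoint_iff_pointwise[OF assms(1-3)] using \<tau>1 \<tau>2 by auto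
qed

lemma S_compatible_comp_disjointE:
  assumes "f permutes A" "g permutes B" "A \<inter> B = {}" and "S_compatible (f \<circ> g) \<tau>"
  obtains \<tau>1 \<tau>2 where "\<tau> = \<tau>1 \<circ> \<tau>2" "S_compatible f \<tau>1" "S_compatible g \<tau>2"
proof -
  have inv: "inv_into UNIV f permutes A" "inv_into UNIV g permutes B"
    using assms(1,2) by (simp_all add: permutes_inv)
  have inj: "inj \<tau>"
    and in_A: "\<And>a. a \<in> A \<Longrightarrow> \<tau> a = f a \<or> \<tau> a = inv_into UNIV f a"
    and not_in_A: "\<And>a. a \<notin> A \<Longrightarrow> \<tau> a = g a \<or> \<tau> a = inv_into UNIV g a"
    using assms(4) unfolding S_compatible_comp_disjoint_iff_pointwise[OF assms(1-3)] by auto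
  have maps_A: "\<tau> a \<in> A" if "a \<in> A" for a
    using in_A[OF that] that permutes_in_image[OF assms(1)] permutes_in_image[OF inv(1)] by metis
  have maps_not_A: "\<tau> a \<in> - A" if "a \<in> - A" for a
    using not_in_A that permutes_disjoint_not_in[OF assms(2,3)]
      permutes_disjoint_not_in[OF inv(2) assms(3)] by (metis ComplD ComplI)
  define \<tau>1 where "\<tau>1 a = (if a \<in> A then \<tau> a else a)" for a
  define \<tau>2 where "\<tau>2 a = (if a \<in> - A then \<tau> a else a)" for a
  have "\<tau> = \<tau>1 \<circ> \<tau>2" using maps_not_A by (auto simp: \<tau>1_def \<tau>2_def)
  moreover have "S_compatible f \<tau>1"
    using inj_override_id_outside[OF inj maps_A] in_A permutes_not_in[OF assms(1)]
    unfolding S_compatible_def \<tau>1_def[abs_def] by auto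
  moreover have "S_compatible g \<tau>2"
  proof -
    have "a \<notin> B" if "a \<in> A" for a using that assms(3) by blast
    then show ?thesis
      using inj_override_id_outside[OF inj maps_not_A] not_in_A permutes_not_in[OF assms(2)]
      unfolding S_compatible_def \<tau>2_def[abs_def] by auto
  qed
  ultimately show ?thesis using that by blast
qed

lemma foldr_cycle_of_list_permutes:
  "foldr (\<circ>) (map cycle_of_list css) id permutes set (concat css)"
proof (induction css)
  case (Cons cs css)
  have "cycle_of_list cs permutes set (concat (cs # css))"
    by (rule permutes_subset[OF cycle_permutes]) auto
  moreover have "foldr (\<circ>) (map cycle_of_list css) id permutes set (concat (cs # css))"
    by (rule permutes_subset[OF Cons.IH]) auto
  moreover have "foldr (\<circ>) (map cycle_of_list (cs # css)) id =
      cycle_of_list cs \<circ> foldr (\<circ>) (map cycle_of_list css) id"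
    by simp
  ultimately show ?case by (simp only:) (rule permutes_compose)
qed (simp add: permutes_def)

lemma S_compatible_id_iff: "S_compatible id \<tau> \<longleftrightarrow> \<tau> = id"
  by (auto simp: S_compatible_def inv_id)

lemma X_perm_Nil: "X_perm [] = {id}"
  by (simp add: X_perm_def)

lemma X_perm_Cons: "X_perm (cs # css) = {\<tau>1 \<circ> \<tau>2 | \<tau>1 \<tau>2. \<tau>1 \<in> X_cycle cs \<and> \<tau>2 \<in> X_perm css}"
  unfolding X_perm_def list_all2_Cons2 by force

lemma X_perm_eq:
  assumes "\<forall>cs\<in>set css. 2 \<le> length cs" "distinct (concat css)"
  shows "X_perm css = {\<tau>. S_compatible (foldr (\<circ>) (map cycle_of_list css) id) \<tau>}"
  using assms
proof (induction css)
  case Nil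
  have nil: "foldr (\<circ>) (map cycle_of_list []) id = (id :: nat \<Rightarrow> nat)" by simp
  show ?case unfolding X_perm_Nil nil S_compatible_id_iff by blast
next
  case (Cons cs css)
  let ?\<pi> = "foldr (\<circ>) (map cycle_of_list css) id"
  have disj: "set cs \<inter> set (concat css) = {}" and "distinct cs"
    using Cons.prems(2) by auto
  have split: "S_compatible (cycle_of_list cs \<circ> ?\<pi>) \<tau> \<longleftrightarrow>
      (\<exists>\<tau>1 \<tau>2. \<tau> = \<tau>1 \<circ> \<tau>2 \<and> S_compatible (cycle_of_list cs) \<tau>1 \<and> S_compatible ?\<pi> \<tau>2)" for \<tau>
    using S_compatible_comp_disjointE[OF cycle_permutes foldr_cycle_of_list_permutes disj]
      S_compatible_comp_disjointI[OF cycle_permutes foldr_cycle_of_list_permutes disj] by metis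
  have IH: "X_perm css = {\<tau>. S_compatible ?\<pi> \<tau>}"
    by (rule Cons.IH) (use Cons.prems in auto)
  have cycle: "X_cycle cs = {\<tau>. S_compatible (cycle_of_list cs) \<tau>}"
    using Cons.prems(1) X_cycle_eq[OF \<open>distinct cs\<close>] by simp
  have foldr: "foldr (\<circ>) (map cycle_of_list (cs # css)) id = cycle_of_list cs \<circ> ?\<pi>" by simp
  show ?case unfolding X_perm_Cons IH cycle foldr using split by blast
qed

lemma distinct_concat_if_disjoint_nth:
  assumes "\<forall>cs\<in>set css. distinct cs \<and> cs \<noteq> []"
    and "\<forall>i<length css. \<forall>j<length css. i \<noteq> j \<longrightarrow> set (css ! i) \<inter> set (css ! j) = {}"
  shows "distinct (concat css)"
proof -
  have "distinct css"
    unfolding distinct_conv_nth using assms by (metis Int_absorb nth_mem set_empty)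
  moreover have "removeAll [] css = css" using assms(1) by (intro removeAll_id) blast
  moreover have "set ys \<inter> set zs = {}" if "ys \<in> set css" "zs \<in> set css" "ys \<noteq> zs" for ys zs
    using that assms(2) by (metis in_set_conv_nth)
  ultimately show ?thesis using assms(1) by (simp add: distinct_concat_iff)
qed

lemma prod_S_mat:
  assumes "finite I"
  shows "(\<Prod>i\<in>I. S_mat \<sigma> i (\<tau> i)) =
    (if \<forall>i\<in>I. \<tau> i = \<sigma> i \<or> \<tau> i = inv_into UNIV \<sigma> i then 1 else 0)"
proof (cases "\<forall>i\<in>I. \<tau> i = \<sigma> i \<or> \<tau> i = inv_into UNIV \<sigma> i")
  case True
  then show ?thesis by (auto simp: S_mat_def intro!: prod.neutral)
next
  case False
  then obtain i where "i \<in> I" "S_mat \<sigma> i (\<tau> i) = 0" by (auto simp: S_mat_def)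
  then show ?thesis using False assms by (auto intro!: prod_zero)
qed

lemma S_compatible_iff_permutes:
  assumes "finite S" "\<sigma> permutes S"
  shows "S_compatible \<sigma> \<tau> \<longleftrightarrow> \<tau> permutes S \<and> (\<forall>i\<in>S. \<tau> i = \<sigma> i \<or> \<tau> i = inv_into UNIV \<sigma> i)"
proof -
  have inv: "inv_into UNIV \<sigma> permutes S" using permutes_inv[OF assms(2)] .
  show ?thesis
  proof
    assume H: "S_compatible \<sigma> \<tau>"
    then have inj: "inj \<tau>" and vals: "\<And>i. \<tau> i = \<sigma> i \<or> \<tau> i = inv_into UNIV \<sigma> i"
      by (auto simp: S_compatible_def)
    have "\<tau> ` S \<subseteq> S"
      using vals permutes_in_image[OF assms(2)] permutes_in_image[OF inv] by (metis image_subsetI)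
    then have "bij_betw \<tau> S S"
      using endo_inj_surj[OF assms(1)] inj_on_subset[OF inj] by (auto simp: bij_betw_def)
    moreover have "\<tau> i = i" if "i \<notin> S" for i
      using vals[of i] permutes_not_in[OF assms(2) that] permutes_not_in[OF inv that] by auto
    ultimately show "\<tau> permutes S \<and> (\<forall>i\<in>S. \<tau> i = \<sigma> i \<or> \<tau> i = inv_into UNIV \<sigma> i)"
      using vals bij_imp_permutes by blast
  next
    assume H: "\<tau> permutes S \<and> (\<forall>i\<in>S. \<tau> i = \<sigma> i \<or> \<tau> i = inv_into UNIV \<sigma> i)"
    then have "\<tau> i = \<sigma> i \<or> \<tau> i = inv_into UNIV \<sigma> i" for i
      using permutes_not_in[OF assms(2)] permutes_not_in[of \<tau> S] by (cases "i \<in> S") auto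
    then show "S_compatible \<sigma> \<tau>" using H permutes_inj by (auto simp: S_compatible_def)
  qed
qed

lemma gen_matrix_fun_S_mat:
  assumes "\<sigma> permutes {1..n}"
  shows "gen_matrix_fun n G chi (S_mat \<sigma>) = (\<Sum>\<tau> | S_compatible \<sigma> \<tau>. ext_zero G chi \<tau>)"
proof -
  let ?P = "{\<tau>. \<tau> permutes {1..n}}"
  have "gen_matrix_fun n G chi (S_mat \<sigma>) =
      (\<Sum>\<tau>\<in>?P. if \<forall>i\<in>{1..n}. \<tau> i = \<sigma> i \<or> \<tau> i = inv_into UNIV \<sigma> i then ext_zero G chi \<tau> else 0)"
    unfolding gen_matrix_fun_def prod_S_mat[OF finite_atLeastAtMost] by (intro sum.cong) auto
  also have "\<dots> = (\<Sum>\<tau> \<in> {\<tau> \<in> ?P. \<forall>i\<in>{1..n}. \<tau> i = \<sigma> i \<or> \<tau> i = inv_into UNIV \<sigma> i}. ext_zero G chi \<tau>)"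
    by (rule sum.inter_filter[symmetric]) (simp add: finite_permutations)
  also have "{\<tau> \<in> ?P. \<forall>i\<in>{1..n}. \<tau> i = \<sigma> i \<or> \<tau> i = inv_into UNIV \<sigma> i} = {\<tau>. S_compatible \<sigma> \<tau>}"
    using S_compatible_iff_permutes[OF finite_atLeastAtMost assms] by blast
  finally show ?thesis .
qed

theorem mainTheorem4:
  fixes n :: nat and G :: "(nat \<Rightarrow> nat) set" and chi :: "(nat \<Rightarrow> nat) \<Rightarrow> complex"
    and \<sigma> :: "nat \<Rightarrow> nat" and css :: "nat list list"
  assumes "n \<ge> 1"
    and "subgroup G (sym_group n)"
    and "\<sigma> permutes {1..n}"
    and "cycle_decomp_of \<sigma> css"
  shows "gen_matrix_fun n G chi (S_mat \<sigma>) = (\<Sum>\<tau> \<in> X_perm css. ext_zero G chi \<tau>)"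
proof -
  have cycles: "\<forall>cs\<in>set css. distinct cs \<and> 2 \<le> length cs"
    and disjoint: "\<forall>i<length css. \<forall>j<length css. i \<noteq> j \<longrightarrow> set (css ! i) \<inter> set (css ! j) = {}"
    and \<sigma>: "\<sigma> = foldr (\<circ>) (map cycle_of_list css) id"
    using assms(4) unfolding cycle_decomp_of_def by blast+
  have "distinct (concat css)"
    using cycles disjoint by (intro distinct_concat_if_disjoint_nth) auto
  then have "X_perm css = {\<tau>. S_compatible \<sigma> \<tau>}"
    using X_perm_eq cycles \<sigma> by simp
  then show ?thesis using gen_matrix_fun_S_mat[OF assms(3)] by simp
qed

end
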